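(* Let $C_*\ge3$ and $H>0$, and let $R_e=R_e(C_*,H)$ be the $q$-effective radius. Let $x,y\in\mathbb{Z}^d$ and let $\gamma\in\mathbb{G}_H(x,y)$ be a geodesic of $\mathrm{T}_H(x,y)$. Suppose $e\in\gamma$ is an edge with $x,y\notin\Lambda_{3R_e}(e)$. Then there exists a path $\eta_e$ from $x$ to $y$ such that (a) $\eta_e\cap\Lambda_{R_e-1}(e)=\emptyset$ and every edge of $\eta_e\setminus\gamma$ is $q$-open; (b) $|\eta_e\setminus\gamma|\le C_*R_e$.
   Context: Edge weights $(\tau_e)$ on $\mathcal{E}(\mathbb{Z}^d)$ are i.i.d. with values in $[0,\infty]$; for a fixed $\lambda>0$, an edge is $q$-open if $\tau_e\le\lambda$. A path is a sequence of distinct vertices with consecutive vertices at $\ell^1$-distance 1; $\mathcal{P}(A)$ is the set of paths in $A$, $|\cdot|$ counts edges. $\mathrm{T}_H^A(u,v)$ is the passage time with weights $\tau_e\wedge H$ over paths in $A$; $\mathrm{T}_H=\mathrm{T}_H^{\mathbb{Z}^d}$; $\mathbb{G}_H(u,v;A)$ is the set of paths in $A$ from $u$ to $v$ attaining $\mathrm{T}_H^A(u,v)$, $\mathbb{G}_H(u,v)=\mathbb{G}_H(u,v;\mathbb{Z}^d)$, $\mathbb{G}_H(A)=\bigcup_{u,v\in A}\mathbb{G}_H(u,v;A)$. $\mathrm{D}_q^U(A,B)$ is the minimal number of edges of a $q$-open path inside $U$ from $A$ to $B$. $\Lambda_t(x)=x+[-t,t]^d\cap\mathbb{Z}^d$,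 $\partial\Lambda_t(x)=\Lambda_t(x)\setminus\Lambda_{t-1}(x)$; for $e=(x_e,y_e)$ with $\|x_e\|_1<\|y_e\|_1$, $\Lambda_N(e)=\Lambda_N(x_e)$, $\mathrm{A}_N(e)=\Lambda_{3N}(e)\setminus\Lambda_N(e)$, and $\mathscr{C}(\mathrm{A}_N(e))$ is the set of paths inside $\mathrm{A}_N(e)$ joining $\partial\Lambda_N(e)$ and $\partial\Lambda_{3N}(e)$. The effective radius is $R_e=\inf\{N\ge3:\forall\gamma_1,\gamma_2\in\mathbb{G}_H(\Lambda_{C_*N}(e))\cap\mathscr{C}(\mathrm{A}_N(e)),\ \mathrm{D}_q^{\mathrm{A}_N(e)}(\gamma_1,\gamma_2)\le C_*N\}$. (In the paper $C_*$ is the constant fixed by its tail estimate for $R_e$.) *)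

theory Defs
  imports "HOL-Analysis.Analysis"
begin

text \<open>Vertices of the lattice Z^d are elements of int ^ 'd (d = CARD('d)).
  Edges are unordered pairs {u,v} of vertices at l1-distance 1.\<close>

definition l1 :: "int ^ 'd \<Rightarrow> int" where
  "l1 z = (\<Sum>i\<in>UNIV. \<bar>z $ i\<bar>)"

definition adj :: "int ^ 'd \<Rightarrow> int ^ 'd \<Rightarrow> bool" where
  "adj u v \<longleftrightarrow> l1 (u - v) = 1"

definition is_path :: "(int ^ 'd) list \<Rightarrow> bool" where
  "is_path p \<longleftrightarrow> p \<noteq> [] \<and> distinct p \<and>
     (\<forall>i. Suc i < length p \<longrightarrow> adj (p ! i) (p ! Suc i))"

definition path_edges :: "(int ^ 'd) list \<Rightarrow> (int ^ 'd) set set" where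
  "path_edges p = {{p ! i, p ! Suc i} | i. Suc i < length p}"

definition path_from_to :: "(int ^ 'd) list \<Rightarrow> int ^ 'd \<Rightarrow> int ^ 'd \<Rightarrow> bool" where
  "path_from_to p u v \<longleftrightarrow> is_path p \<and> hd p = u \<and> last p = v"

definition path_weight :: "((int ^ 'd) set \<Rightarrow> ereal) \<Rightarrow> real \<Rightarrow> (int ^ 'd) list \<Rightarrow> ereal" where
  "path_weight \<tau> H p = (\<Sum>e\<in>path_edges p. min (\<tau> e) (ereal H))"

definition passage_time ::
  "((int ^ 'd) set \<Rightarrow> ereal) \<Rightarrow> real \<Rightarrow> (int ^ 'd) set \<Rightarrow> int ^ 'd \<Rightarrow> int ^ 'd \<Rightarrow> ereal" where
  "passage_time \<tau> H A u v =
     (INF p \<in> {p. path_from_to p u v \<and> set p \<subseteq> A}. path_weight \<tau> H p)"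

definition geodesics ::
  "((int ^ 'd) set \<Rightarrow> ereal) \<Rightarrow> real \<Rightarrow> (int ^ 'd) set \<Rightarrow> int ^ 'd \<Rightarrow> int ^ 'd \<Rightarrow> (int ^ 'd) list set" where
  "geodesics \<tau> H A u v =
     {p. path_from_to p u v \<and> set p \<subseteq> A \<and> path_weight \<tau> H p = passage_time \<tau> H A u v}"

definition geodesics_in ::
  "((int ^ 'd) set \<Rightarrow> ereal) \<Rightarrow> real \<Rightarrow> (int ^ 'd) set \<Rightarrow> (int ^ 'd) list set" where
  "geodesics_in \<tau> H A = (\<Union>u\<in>A. \<Union>v\<in>A. geodesics \<tau> H A u v)"

definition q_open :: "((int ^ 'd) set \<Rightarrow> ereal) \<Rightarrow> real \<Rightarrow> (int ^ 'd) set \<Rightarrow> bool" where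
  "q_open \<tau> lam e \<longleftrightarrow> \<tau> e \<le> ereal lam"

definition Dq ::
  "((int ^ 'd) set \<Rightarrow> ereal) \<Rightarrow> real \<Rightarrow> (int ^ 'd) set \<Rightarrow> (int ^ 'd) set \<Rightarrow> (int ^ 'd) set \<Rightarrow> ereal" where
  "Dq \<tau> lam U A B =
     (INF p \<in> {p. is_path p \<and> set p \<subseteq> U \<and> hd p \<in> A \<and> last p \<in> B \<and>
                 (\<forall>e\<in>path_edges p. q_open \<tau> lam e)}.
        ereal (real (length p - 1)))"

definition box_at :: "int ^ 'd \<Rightarrow> real \<Rightarrow> (int ^ 'd) set" where
  "box_at z t = {w. \<forall>i. real_of_int \<bar>w $ i - z $ i\<bar> \<le> t}"

definition bdry_at :: "int ^ 'd \<Rightarrow> real \<Rightarrow> (int ^ 'd) set" where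
  "bdry_at z t = box_at z t - box_at z (t - 1)"

definition edge_base :: "(int ^ 'd) set \<Rightarrow> int ^ 'd" where
  "edge_base e = (SOME z. z \<in> e \<and> (\<forall>w\<in>e. l1 z < l1 w \<or> w = z))"

definition annulus :: "(int ^ 'd) set \<Rightarrow> nat \<Rightarrow> (int ^ 'd) set" where
  "annulus e N = box_at (edge_base e) (3 * real N) - box_at (edge_base e) (real N)"

text \<open>C(A_N(e)): paths in the (closed) annulus joining the inner boundary
  dLambda_N(e) and the outer boundary dLambda_{3N}(e).\<close>
definition crossings :: "(int ^ 'd) set \<Rightarrow> nat \<Rightarrow> (int ^ 'd) list set" where
  "crossings e N = {p. is_path p \<and>
      set p \<subseteq> box_at (edge_base e) (3 * real N) - box_at (edge_base e) (real N - 1) \<and>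
      ((hd p \<in> bdry_at (edge_base e) (real N) \<and> last p \<in> bdry_at (edge_base e) (3 * real N)) \<or>
       (hd p \<in> bdry_at (edge_base e) (3 * real N) \<and> last p \<in> bdry_at (edge_base e) (real N)))}"

definition eff_radius_ok ::
  "((int ^ 'd) set \<Rightarrow> ereal) \<Rightarrow> real \<Rightarrow> real \<Rightarrow> real \<Rightarrow> (int ^ 'd) set \<Rightarrow> nat \<Rightarrow> bool" where
  "eff_radius_ok \<tau> H lam C e N \<longleftrightarrow>
     (\<forall>\<gamma>1 \<in> geodesics_in \<tau> H (box_at (edge_base e) (C * real N)) \<inter> crossings e N.
      \<forall>\<gamma>2 \<in> geodesics_in \<tau> H (box_at (edge_base e) (C * real N)) \<inter> crossings e N.
        Dq \<tau> lam (annulus e N) (set \<gamma>1) (set \<gamma>2) \<le> ereal (C * real N))"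

definition eff_radius ::
  "((int ^ 'd) set \<Rightarrow> ereal) \<Rightarrow> real \<Rightarrow> real \<Rightarrow> real \<Rightarrow> (int ^ 'd) set \<Rightarrow> enat" where
  "eff_radius \<tau> H lam C e = (INF N \<in> {N. 3 \<le> N \<and> eff_radius_ok \<tau> H lam C e N}. enat N)"

end

(* The geodesic gamma passes through the base point of e but starts and ends outside
   Lambda_3R(e), so it crosses the annulus A_R(e) on the way in and again on the way out, and
   the parts of gamma before the first crossing and after the second avoid Lambda_(R-1)(e).
   A sub-path of a geodesic is a geodesic of every region containing it, so both crossings lie
   in G_H(Lambda_CR(e)) and the definition of R = R_e yields a q-open path p with at most C R
   edges inside the annulus joining them.  Replacing the middle part of gamma by p and erasing
   loops gives eta: it avoids Lambda_(R-1)(e), and its edges outside gamma are edges of p. *)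

theory Submission
  imports Defs
begin

definition walk :: "(int ^ 'd) list \<Rightarrow> bool" where
  "walk w \<longleftrightarrow> w \<noteq> [] \<and> successively adj w"

lemma is_path_iff_walk: "is_path p \<longleftrightarrow> walk p \<and> distinct p"
  unfolding is_path_def walk_def successively_conv_nth by blast

lemma walk_append_Cons: "walk (xs @ a # ys) \<longleftrightarrow> walk (xs @ [a]) \<and> walk (a # ys)"
  unfolding walk_def by (auto simp: successively_append_iff successively_Cons)

lemma walk_append3:
  assumes "xs \<noteq> []"
  shows "walk (pre @ xs @ suf) \<longleftrightarrow> walk (pre @ [hd xs]) \<and> walk xs \<and> walk (last xs # suf)"
proof -
  obtain ys where ys: "xs = hd xs # ys" using assms by (cases xs) auto
  obtain zs where zs: "xs = zs @ [last xs]" using assms by (metis append_butlast_last_id)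
  have "walk (pre @ xs @ suf) \<longleftrightarrow> walk (pre @ [hd xs]) \<and> walk (xs @ suf)"
    by (subst ys) (metis append_Cons walk_append_Cons ys)
  also have "walk (xs @ suf) \<longleftrightarrow> walk xs \<and> walk (last xs # suf)"
    by (subst zs) (metis append.assoc append_Cons append_Nil walk_append_Cons zs)
  finally show ?thesis .
qed

lemma adj_sym: "adj u v \<Longrightarrow> adj v u"
  unfolding adj_def l1_def by (simp add: abs_minus_commute)

lemma walk_rev: "walk w \<Longrightarrow> walk (rev w)"
  unfolding walk_def by (auto elim: successively_mono intro: adj_sym)

lemma path_edges_Nil [simp]: "path_edges [] = {}"
  and path_edges_singleton [simp]: "path_edges [x] = {}"
  by (simp_all add: path_edges_def)

lemma path_edges_conv_image: "path_edges l = (\<lambda>i. {l ! i, l ! Suc i}) ` {..<length l - 1}"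
  unfolding path_edges_def by (auto simp: less_diff_conv)

lemma path_edges_Cons_Cons [simp]: "path_edges (x # y # l) = insert {x, y} (path_edges (y # l))"
  unfolding path_edges_conv_image by (simp add: lessThan_Suc_eq_insert_0 image_image)

lemma path_edges_append_Cons: "path_edges (xs @ a # ys) = path_edges (xs @ [a]) \<union> path_edges (a # ys)"
proof (induction xs)
  case (Cons x xs)
  then show ?case by (cases xs) auto
qed simp

lemma path_edges_append3:
  assumes "xs \<noteq> []"
  shows "path_edges (pre @ xs @ suf) = path_edges (pre @ [hd xs]) \<union> path_edges xs \<union> path_edges (last xs # suf)"
proof -
  obtain ys where ys: "xs = hd xs # ys" using assms by (cases xs) auto
  obtain zs where zs: "xs = zs @ [last xs]" using assms by (metis append_butlast_last_id)
  have "path_edges (pre @ xs @ suf) = path_edges (pre @ [hd xs]) \<union> path_edges (xs @ suf)"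
    by (subst ys) (metis append_Cons path_edges_append_Cons ys)
  also have "path_edges (xs @ suf) = path_edges xs \<union> path_edges (last xs # suf)"
    by (subst zs) (metis append.assoc append_Cons append_Nil path_edges_append_Cons zs)
  finally show ?thesis by (simp only: Un_assoc)
qed

lemma finite_path_edges: "finite (path_edges l)"
  unfolding path_edges_conv_image by simp

lemma card_path_edges_le: "card (path_edges l) \<le> length l - 1"
  unfolding path_edges_conv_image using card_image_le[of "{..<length l - 1}"] by simp

lemma path_edges_subset_set: "f \<in> path_edges l \<Longrightarrow> f \<subseteq> set l"
  unfolding path_edges_def by auto

lemma walk_edge_adj: "walk w \<Longrightarrow> f \<in> path_edges w \<Longrightarrow> \<exists>u v. adj u v \<and> f = {u, v}"
  unfolding walk_def path_edges_def successively_conv_nth by fast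

lemma path_edges_snoc_meets: "f \<in> path_edges (xs @ [a]) \<Longrightarrow> f \<inter> set xs \<noteq> {}"
proof (induction xs)
  case (Cons x xs)
  then show ?case by (cases xs) auto
qed simp

lemma path_edges_Cons_meets: "f \<in> path_edges (a # xs) \<Longrightarrow> f \<inter> set xs \<noteq> {}"
proof (induction xs arbitrary: a)
  case (Cons x xs)
  then show ?case by auto
qed simp

lemma is_path_infix: "is_path (pre @ mid @ suf) \<Longrightarrow> mid \<noteq> [] \<Longrightarrow> is_path mid"
  unfolding is_path_iff_walk using walk_append3[of mid pre suf] by auto

lemma walk_erase_loops:
  "walk w \<Longrightarrow> \<exists>p. is_path p \<and> hd p = hd w \<and> last p = last w \<and> set p \<subseteq> set w
     \<and> path_edges p \<subseteq> path_edges w"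
proof (induction "length w" arbitrary: w rule: less_induct)
  case less
  show ?case
  proof (cases "distinct w")
    case True
    then show ?thesis using less.prems by (intro exI[of _ w]) (simp add: is_path_iff_walk)
  next
    case False
    then obtain xs ys zs a where w: "w = xs @ [a] @ ys @ [a] @ zs"
      using not_distinct_decomp by blast
    define w' where "w' = xs @ [a] @ zs"
    have "walk (xs @ [a])" "walk (a # zs)"
      using less.prems walk_append_Cons[of xs a "ys @ a # zs"] walk_append_Cons[of "a # ys" a zs]
      unfolding w by auto
    then have "walk w'"
      unfolding w'_def using walk_append_Cons[of xs a zs] by simp
    moreover have "length w' < length w" unfolding w w'_def by simp
    ultimately obtain p where p: "is_path p" "hd p = hd w'" "last p = last w'"
      "set p \<subseteq> set w'" "path_edges p \<subseteq> path_edges w'"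
      using less.hyps by blast
    have "path_edges w' \<subseteq> path_edges w"
      using path_edges_append_Cons[of xs a "ys @ a # zs"] path_edges_append_Cons[of xs a zs]
        path_edges_append_Cons[of "a # ys" a zs]
      unfolding w w'_def by auto
    moreover have "set w' \<subseteq> set w" "hd w' = hd w" "last w' = last w"
      unfolding w w'_def by (auto simp: hd_append)
    ultimately show ?thesis using p by (intro exI[of _ p]) auto
  qed
qed

lemma adj_coord_le: "adj u v \<Longrightarrow> \<bar>u $ i - v $ i\<bar> \<le> 1"
  unfolding adj_def l1_def
  using member_le_sum[of i UNIV "\<lambda>j. \<bar>(u - v) $ j\<bar>"] by simp

lemma box_at_mono: "t \<le> t' \<Longrightarrow> box_at z t \<subseteq> box_at z t'"
  unfolding box_at_def by (auto intro: order_trans)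

lemma box_at_center: "0 \<le> t \<Longrightarrow> z \<in> box_at z t"
  unfolding box_at_def by auto

lemma box_at_adj: "adj u v \<Longrightarrow> u \<in> box_at z t \<Longrightarrow> v \<in> box_at z (t + 1)"
  unfolding box_at_def
proof (intro CollectI allI)
  fix i
  assume "adj u v" and "u \<in> {w. \<forall>i. real_of_int \<bar>w $ i - z $ i\<bar> \<le> t}"
  then have "\<bar>u $ i - v $ i\<bar> \<le> 1" "real_of_int \<bar>u $ i - z $ i\<bar> \<le> t"
    using adj_coord_le by auto
  then show "real_of_int \<bar>v $ i - z $ i\<bar> \<le> t + 1" by linarith
qed

lemma even_l1_diff_sub: "even (l1 u - l1 v - l1 (u - v))"
proof -
  have "even (\<bar>a\<bar> - \<bar>b\<bar> - \<bar>a - b\<bar>)" for a b :: int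
    by (cases "a \<ge> 0"; cases "b \<ge> 0"; cases "a \<ge> b") (auto simp: abs_if)
  then have "even (\<Sum>i\<in>UNIV. \<bar>u $ i\<bar> - \<bar>v $ i\<bar> - \<bar>u $ i - v $ i\<bar>)"
    by (intro dvd_sum) simp
  then show ?thesis unfolding l1_def by (simp add: sum_subtractf)
qed

lemma adj_l1_neq: "adj u v \<Longrightarrow> l1 u \<noteq> l1 v"
  using even_l1_diff_sub[of u v] unfolding adj_def by auto

lemma edge_base_mem: "adj u v \<Longrightarrow> edge_base {u, v} \<in> {u, v}"
  unfolding edge_base_def
proof (rule someI2_ex)
  assume "adj u v"
  then show "\<exists>z. z \<in> {u, v} \<and> (\<forall>w\<in>{u, v}. l1 z < l1 w \<or> w = z)"
    using adj_l1_neq[of u v] by (cases "l1 u < l1 v") auto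
qed simp

lemma edge_base_mem_path: "walk w \<Longrightarrow> e \<in> path_edges w \<Longrightarrow> edge_base e \<in> set w"
  by (metis edge_base_mem path_edges_subset_set subsetD walk_edge_adj)

lemma walk_adj_prev: "walk (xs @ a # ys) \<Longrightarrow> xs \<noteq> [] \<Longrightarrow> adj (last xs) a"
  unfolding walk_def by (simp add: successively_append_iff)

lemma walk_adj_next: "walk (xs @ a # ys) \<Longrightarrow> ys \<noteq> [] \<Longrightarrow> adj a (hd ys)"
  unfolding walk_def by (simp add: successively_append_iff successively_Cons)

(* seg runs from the last exit from box_at z (s - 1) before the first entry into box_at z t
   up to that entry. *)
lemma walk_crossing_segment:
  assumes w: "walk w" and start: "hd w \<notin> box_at z s" and hit: "\<exists>v\<in>set w. v \<in> box_at z (t - 1)"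
    and ts: "t + 1 \<le> s"
  shows "\<exists>pre seg suf. w = pre @ seg @ suf \<and> seg \<noteq> [] \<and> set pre \<inter> box_at z (t - 1) = {}
    \<and> set seg \<subseteq> box_at z s - box_at z (t - 1) \<and> hd seg \<in> bdry_at z s \<and> last seg \<in> bdry_at z t"
proof -
  have inner: "box_at z (t - 1) \<subseteq> box_at z t" and mid: "box_at z t \<subseteq> box_at z (s - 1)"
    and outer: "box_at z (s - 1) \<subseteq> box_at z s"
    using ts by (simp_all add: box_at_mono)
  have "\<exists>v\<in>set w. v \<in> box_at z t" using hit inner by blast
  then obtain P a Q where wPQ: "w = P @ a # Q" and a_in: "a \<in> box_at z t"
    and P_out: "\<forall>v\<in>set P. v \<notin> box_at z t"
    by (rule split_list_first_propE)
  have "P \<noteq> []"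
    using start a_in mid outer unfolding wPQ by auto
  have "adj (last P) a" using walk_adj_prev w \<open>P \<noteq> []\<close> unfolding wPQ by blast
  then have a_out: "a \<notin> box_at z (t - 1)"
    using box_at_adj[OF adj_sym] P_out \<open>P \<noteq> []\<close> by fastforce
  have "\<exists>v\<in>set P. v \<notin> box_at z (s - 1)"
    using start outer \<open>P \<noteq> []\<close> unfolding wPQ by (auto intro: bexI[of _ "hd P"])
  then obtain P1 b P2 where P: "P = P1 @ b # P2" and b_out: "b \<notin> box_at z (s - 1)"
    and P2_in: "\<forall>v\<in>set P2. v \<in> box_at z (s - 1)"
    by (rule split_list_last_propE) simp
  have "hd (P2 @ [a]) \<in> box_at z (s - 1)"
    using P2_in a_in mid by (cases P2) auto
  moreover have "adj b (hd (P2 @ [a]))"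
    using walk_adj_next[of P1 b "P2 @ a # Q"] w unfolding wPQ P by (cases P2) auto
  ultimately have b_in: "b \<in> box_at z s" using box_at_adj adj_sym by fastforce
  show ?thesis
  proof (intro exI conjI)
    show "w = P1 @ (b # P2 @ [a]) @ Q" unfolding wPQ P by simp
    show "set P1 \<inter> box_at z (t - 1) = {}" using P_out inner unfolding P by auto
    show "set (b # P2 @ [a]) \<subseteq> box_at z s - box_at z (t - 1)"
      using b_in P_out P2_in a_in a_out inner mid outer unfolding P by auto
    show "hd (b # P2 @ [a]) \<in> bdry_at z s" using b_in b_out unfolding bdry_at_def by simp
    show "last (b # P2 @ [a]) \<in> bdry_at z t" using a_in a_out unfolding bdry_at_def by simp
  qed simp
qed

lemma edge_weight_nonneg:
  assumes "\<forall>u v. adj u v \<longrightarrow> \<tau> {u, v} \<ge> 0" "0 \<le> H" "walk w" "f \<in> path_edges w"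
  shows "0 \<le> min (\<tau> f) (ereal H)"
  using assms walk_edge_adj[OF assms(3,4)] by auto

lemma sum_union_le:
  fixes g :: "'a \<Rightarrow> 'b::ordered_comm_monoid_add"
  assumes "finite A" "finite B" "\<forall>x\<in>A \<inter> B. 0 \<le> g x"
  shows "sum g (A \<union> B) \<le> sum g A + sum g B"
proof -
  have "sum g (A \<union> B) \<le> sum g (A \<union> B) + sum g (A \<inter> B)"
    using assms(3) by (intro add_increasing2[OF sum_nonneg]) auto
  also have "\<dots> = sum g A + sum g B" using assms(1,2) by (rule sum.union_inter)
  finally show ?thesis .
qed

lemma path_weight_nonneg:
  "\<forall>u v. adj u v \<longrightarrow> \<tau> {u, v} \<ge> 0 \<Longrightarrow> 0 \<le> H \<Longrightarrow> walk w \<Longrightarrow> 0 \<le> path_weight \<tau> H w"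
  unfolding path_weight_def by (intro sum_nonneg) (rule edge_weight_nonneg)

lemma path_weight_neq_PInf: "path_weight \<tau> H w \<noteq> \<infinity>"
  unfolding path_weight_def by (auto simp: sum_Pinfty min_def)

lemma path_weight_append3_le:
  assumes nn: "\<forall>u v. adj u v \<longrightarrow> \<tau> {u, v} \<ge> 0" and H: "0 \<le> H"
    and w: "walk (pre @ xs @ suf)" and "xs \<noteq> []"
  shows "path_weight \<tau> H (pre @ xs @ suf)
    \<le> path_weight \<tau> H (pre @ [hd xs]) + path_weight \<tau> H xs + path_weight \<tau> H (last xs # suf)"
  using edge_weight_nonneg[OF nn H w]
  unfolding path_weight_def path_edges_append3[OF \<open>xs \<noteq> []\<close>]
  by (intro order_trans[OF sum_union_le] add_right_mono sum_union_le) (auto simp: finite_path_edges)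

lemma path_weight_append3:
  assumes "distinct (pre @ xs @ suf)" "xs \<noteq> []"
  shows "path_weight \<tau> H (pre @ xs @ suf)
    = path_weight \<tau> H (pre @ [hd xs]) + path_weight \<tau> H xs + path_weight \<tau> H (last xs # suf)"
proof -
  let ?E1 = "path_edges (pre @ [hd xs])" and ?E2 = "path_edges xs" and ?E3 = "path_edges (last xs # suf)"
  have E1: "f \<inter> set pre \<noteq> {}" "f \<subseteq> set pre \<union> set xs" if "f \<in> ?E1" for f
    using that path_edges_snoc_meets path_edges_subset_set \<open>xs \<noteq> []\<close> by fastforce+
  have E2: "f \<subseteq> set xs" if "f \<in> ?E2" for f
    using that by (rule path_edges_subset_set)
  have E3: "f \<inter> set suf \<noteq> {}" if "f \<in> ?E3" for f
    using that by (rule path_edges_Cons_meets)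
  have pre_xs: "set pre \<inter> set xs = {}" and pre_xs_suf: "(set pre \<union> set xs) \<inter> set suf = {}"
    using assms(1) by auto
  have "?E1 \<inter> ?E2 = {}"
  proof (intro equals0I)
    fix f assume "f \<in> ?E1 \<inter> ?E2"
    then show False using E1(1)[of f] E2[of f] pre_xs by auto
  qed
  moreover have "(?E1 \<union> ?E2) \<inter> ?E3 = {}"
  proof (intro equals0I)
    fix f assume "f \<in> (?E1 \<union> ?E2) \<inter> ?E3"
    then have "f \<subseteq> set pre \<union> set xs" "f \<inter> set suf \<noteq> {}" using E1(2) E2 E3 by auto
    then show False using pre_xs_suf by auto
  qed
  ultimately show ?thesis
    unfolding path_weight_def path_edges_append3[OF \<open>xs \<noteq> []\<close>]
    by (simp add: sum.union_disjoint finite_path_edges)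
qed

lemma passage_time_le_walk_weight:
  assumes nn: "\<forall>u v. adj u v \<longrightarrow> \<tau> {u, v} \<ge> 0" and "0 \<le> H" and w: "walk w" and "set w \<subseteq> A"
  shows "passage_time \<tau> H A (hd w) (last w) \<le> path_weight \<tau> H w"
proof -
  obtain p where p: "is_path p" "hd p = hd w" "last p = last w" "set p \<subseteq> set w"
    "path_edges p \<subseteq> path_edges w"
    using walk_erase_loops[OF w] by blast
  have "passage_time \<tau> H A (hd w) (last w) \<le> path_weight \<tau> H p"
    unfolding passage_time_def using p assms(4) by (intro INF_lower) (auto simp: path_from_to_def)
  also have "\<dots> \<le> path_weight \<tau> H w"
    unfolding path_weight_def using p(5) edge_weight_nonneg[OF nn \<open>0 \<le> H\<close> w]
    by (intro sum_mono2 finite_path_edges) auto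
  finally show ?thesis .
qed

lemma geodesic_infix:
  assumes nn: "\<forall>u v. adj u v \<longrightarrow> \<tau> {u, v} \<ge> 0" and H: "0 \<le> H"
    and geo: "\<gamma> \<in> geodesics \<tau> H A x y" and \<gamma>: "\<gamma> = pre @ mid @ suf" and "mid \<noteq> []"
    and "set mid \<subseteq> B" "B \<subseteq> A"
  shows "mid \<in> geodesics \<tau> H B (hd mid) (last mid)"
proof -
  have "is_path \<gamma>" "hd \<gamma> = x" "last \<gamma> = y" "set \<gamma> \<subseteq> A"
    and weight_\<gamma>: "path_weight \<tau> H \<gamma> = passage_time \<tau> H A x y"
    using geo unfolding geodesics_def path_from_to_def by auto
  then have "walk \<gamma>" "distinct \<gamma>" by (simp_all add: is_path_iff_walk)
  then have walk_outer: "walk (pre @ [hd mid])" "walk (last mid # suf)"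
    using walk_append3[OF \<open>mid \<noteq> []\<close>] unfolding \<gamma> by auto
  have "is_path mid" using \<open>is_path \<gamma>\<close> \<open>mid \<noteq> []\<close> unfolding \<gamma> by (rule is_path_infix)
  define outer where "outer = path_weight \<tau> H (pre @ [hd mid]) + path_weight \<tau> H (last mid # suf)"
  have "\<bar>outer\<bar> \<noteq> \<infinity>"
    using path_weight_nonneg[OF nn H walk_outer(1)] path_weight_nonneg[OF nn H walk_outer(2)]
      path_weight_neq_PInf[of \<tau> H] unfolding outer_def by auto
  have T: "passage_time \<tau> H A x y = outer + path_weight \<tau> H mid"
    using path_weight_append3[OF _ \<open>mid \<noteq> []\<close>] \<open>distinct \<gamma>\<close> weight_\<gamma>
    unfolding \<gamma> outer_def by (simp add: ac_simps)
  have "path_weight \<tau> H mid \<le> path_weight \<tau> H q"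
    if q: "path_from_to q (hd mid) (last mid)" "set q \<subseteq> B" for q
  proof -
    have "q \<noteq> []" "hd q = hd mid" "last q = last mid" "walk q"
      using q unfolding path_from_to_def is_path_iff_walk walk_def by auto
    then have W: "walk (pre @ q @ suf)" "hd (pre @ q @ suf) = x" "last (pre @ q @ suf) = y"
      using walk_outer \<open>mid \<noteq> []\<close> \<open>hd \<gamma> = x\<close> \<open>last \<gamma> = y\<close> walk_append3[of q pre suf]
      unfolding \<gamma> by (auto simp: hd_append last_append)
    have "set (pre @ q @ suf) \<subseteq> A" using q \<open>set \<gamma> \<subseteq> A\<close> \<open>B \<subseteq> A\<close> unfolding \<gamma> by auto
    from passage_time_le_walk_weight[OF nn H W(1) this]
    have "outer + path_weight \<tau> H mid \<le> path_weight \<tau> H (pre @ q @ suf)"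
      unfolding W(2,3) T .
    also have "\<dots> \<le> outer + path_weight \<tau> H q"
      using path_weight_append3_le[OF nn H W(1) \<open>q \<noteq> []\<close>] \<open>hd q = hd mid\<close> \<open>last q = last mid\<close>
      unfolding outer_def by (simp add: ac_simps)
    finally show ?thesis
      using \<open>\<bar>outer\<bar> \<noteq> \<infinity>\<close> ereal_add_le_add_iff by auto
  qed
  then have "path_weight \<tau> H mid = passage_time \<tau> H B (hd mid) (last mid)"
    using \<open>is_path mid\<close> \<open>set mid \<subseteq> B\<close> unfolding passage_time_def
    by (intro antisym INF_greatest INF_lower) (auto simp: path_from_to_def)
  then show ?thesis
    using \<open>is_path mid\<close> \<open>set mid \<subseteq> B\<close> unfolding geodesics_def path_from_to_def by simp
qed

lemma Dq_leE:
  assumes "Dq \<tau> lam U A B \<le> ereal r"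
  obtains p where "is_path p" "set p \<subseteq> U" "hd p \<in> A" "last p \<in> B"
    "\<forall>f\<in>path_edges p. q_open \<tau> lam f" "real (length p - 1) \<le> r"
proof -
  define S where "S = {p. is_path p \<and> set p \<subseteq> U \<and> hd p \<in> A \<and> last p \<in> B \<and>
                 (\<forall>f\<in>path_edges p. q_open \<tau> lam f)}"
  have Dq: "Dq \<tau> lam U A B = (INF p\<in>S. ereal (real (length p - 1)))"
    unfolding Dq_def S_def by simp
  have "S \<noteq> {}"
    using assms unfolding Dq by (auto simp: top_ereal_def)
  then obtain p where "p \<in> S" and p_min: "\<forall>q\<in>S. length p - 1 \<le> length q - 1"
    using ex_has_least_nat[of "\<lambda>p. p \<in> S" _ "\<lambda>p. length p - 1"] by blast
  have "ereal (real (length p - 1)) \<le> Dq \<tau> lam U A B"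
    unfolding Dq using p_min by (intro INF_greatest) simp
  then have "real (length p - 1) \<le> r" using assms by (metis ereal_less_eq(3) order_trans)
  then show ?thesis using \<open>p \<in> S\<close> that unfolding S_def by blast
qed

lemma eff_radius_eq_enatD:
  assumes "eff_radius \<tau> H lam C e = enat R"
  shows "3 \<le> R" "eff_radius_ok \<tau> H lam C e R"
proof -
  define S where "S = {N. 3 \<le> N \<and> eff_radius_ok \<tau> H lam C e N}"
  have R: "enat R = Inf (enat ` S)" using assms unfolding eff_radius_def S_def by simp
  then have "S \<noteq> {}" by (auto simp: Inf_enat_def)
  then have "Inf (enat ` S) \<in> enat ` S" unfolding Inf_enat_def by (auto intro: LeastI)
  then have "R \<in> S" unfolding R[symmetric] by auto
  then show "3 \<le> R" "eff_radius_ok \<tau> H lam C e R" unfolding S_def by auto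
qed

(* hd p and last p may occur on gamma in either order: loop erasure absorbs the overlap. *)
lemma path_reroute:
  assumes \<gamma>: "path_from_to \<gamma> x y" and split1: "\<gamma> = P1 @ Q1" and split2: "\<gamma> = Q2 @ P2"
    and p: "walk p" "hd p \<in> set P1" "last p \<in> set P2"
  shows "\<exists>\<eta>. path_from_to \<eta> x y \<and> set \<eta> \<subseteq> set P1 \<union> set p \<union> set P2
    \<and> path_edges \<eta> \<subseteq> path_edges \<gamma> \<union> path_edges p"
proof -
  obtain A S where A: "P1 = A @ hd p # S" using p(2) by (meson split_list)
  obtain T D where D: "P2 = T @ last p # D" using p(3) by (meson split_list)
  have \<gamma>A: "\<gamma> = A @ hd p # (S @ Q1)" and \<gamma>D: "\<gamma> = (Q2 @ T) @ last p # D"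
    using split1 split2 unfolding A D by simp_all
  have "walk \<gamma>" "hd \<gamma> = x" "last \<gamma> = y"
    using \<gamma> unfolding path_from_to_def by (simp_all add: is_path_iff_walk)
  have "p \<noteq> []" using p(1) unfolding walk_def by simp
  define W where "W = A @ p @ D"
  have "walk (A @ [hd p])" "walk (last p # D)"
    using \<open>walk \<gamma>\<close> walk_append_Cons[of A "hd p"] walk_append_Cons[of "Q2 @ T" "last p"]
    by (metis \<gamma>A, metis \<gamma>D)
  then have "walk W" unfolding W_def using walk_append3[OF \<open>p \<noteq> []\<close>] p(1) by simp
  moreover have "hd W = x"
    using \<open>hd \<gamma> = x\<close> \<open>p \<noteq> []\<close> unfolding W_def \<gamma>A by (cases A) (auto simp: hd_append)
  moreover have "last W = y"
    using \<open>last \<gamma> = y\<close> \<open>p \<noteq> []\<close> unfolding W_def \<gamma>D by (cases D) (auto simp: last_append)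
  moreover have "path_edges W \<subseteq> path_edges \<gamma> \<union> path_edges p"
    using path_edges_append_Cons[of A "hd p" "S @ Q1"] path_edges_append_Cons[of "Q2 @ T" "last p" D]
    unfolding W_def path_edges_append3[OF \<open>p \<noteq> []\<close>] \<gamma>A[symmetric] \<gamma>D[symmetric] by auto
  moreover have "set W \<subseteq> set P1 \<union> set p \<union> set P2" unfolding W_def A D by auto
  moreover obtain \<eta> where "is_path \<eta>" "hd \<eta> = hd W" "last \<eta> = last W" "set \<eta> \<subseteq> set W"
    "path_edges \<eta> \<subseteq> path_edges W"
    using walk_erase_loops[OF \<open>walk W\<close>] by blast
  ultimately show ?thesis unfolding path_from_to_def by (intro exI[of _ \<eta>]) auto
qed

lemma geodesic_segment_in_crossings:
  assumes nn: "\<forall>u v. adj u v \<longrightarrow> \<tau> {u, v} \<ge> 0" and H: "0 \<le> H" and "3 \<le> C"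
    and geo: "\<gamma> \<in> geodesics \<tau> H UNIV x y" and \<gamma>: "\<gamma> = pre @ seg @ suf" and "seg \<noteq> []"
    and seg: "set seg \<subseteq> box_at (edge_base e) (3 * real N) - box_at (edge_base e) (real N - 1)"
    and ends: "(hd seg \<in> bdry_at (edge_base e) (real N) \<and> last seg \<in> bdry_at (edge_base e) (3 * real N)) \<or>
      (hd seg \<in> bdry_at (edge_base e) (3 * real N) \<and> last seg \<in> bdry_at (edge_base e) (real N))"
  shows "seg \<in> geodesics_in \<tau> H (box_at (edge_base e) (C * real N)) \<inter> crossings e N"
proof -
  let ?B = "box_at (edge_base e) (C * real N)"
  have "3 * real N \<le> C * real N" using \<open>3 \<le> C\<close> by (intro mult_right_mono) auto
  then have "set seg \<subseteq> ?B" using seg box_at_mono by blast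
  then have "seg \<in> geodesics \<tau> H ?B (hd seg) (last seg)"
    using geodesic_infix[OF nn H geo \<gamma> \<open>seg \<noteq> []\<close>] by blast
  moreover have "hd seg \<in> ?B" "last seg \<in> ?B"
    using \<open>set seg \<subseteq> ?B\<close> \<open>seg \<noteq> []\<close> by auto
  moreover have "is_path seg"
    using geo \<open>seg \<noteq> []\<close> is_path_infix unfolding \<gamma> geodesics_def path_from_to_def by blast
  ultimately show ?thesis
    using seg ends unfolding geodesics_in_def crossings_def by blast
qed

lemma geodesic_crossings_around_edge:
  assumes nn: "\<forall>u v. adj u v \<longrightarrow> \<tau> {u, v} \<ge> 0" and H: "0 \<le> H" and C: "3 \<le> C"
    and geo: "\<gamma> \<in> geodesics \<tau> H UNIV x y" and "e \<in> path_edges \<gamma>" and "1 \<le> N"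
    and "x \<notin> box_at (edge_base e) (3 * real N)" and "y \<notin> box_at (edge_base e) (3 * real N)"
  obtains P1 Q1 Q2 P2 seg1 seg2 where "\<gamma> = P1 @ Q1" "\<gamma> = Q2 @ P2"
    "set P1 \<inter> box_at (edge_base e) (real N - 1) = {}" "set P2 \<inter> box_at (edge_base e) (real N - 1) = {}"
    "set seg1 \<subseteq> set P1" "seg1 \<in> geodesics_in \<tau> H (box_at (edge_base e) (C * real N)) \<inter> crossings e N"
    "set seg2 \<subseteq> set P2" "seg2 \<in> geodesics_in \<tau> H (box_at (edge_base e) (C * real N)) \<inter> crossings e N"
proof -
  define z where "z = edge_base e"
  note crossing = geodesic_segment_in_crossings[OF nn H C geo]
  have "walk \<gamma>" "hd \<gamma> = x" "last \<gamma> = y"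
    using geo unfolding geodesics_def path_from_to_def by (auto simp: is_path_iff_walk)
  have "z \<in> box_at z (real N - 1)" using \<open>1 \<le> N\<close> by (intro box_at_center) simp
  then have hit: "\<exists>v\<in>set \<gamma>. v \<in> box_at z (real N - 1)"
    using edge_base_mem_path[OF \<open>walk \<gamma>\<close> \<open>e \<in> path_edges \<gamma>\<close>] unfolding z_def by blast
  have "real N + 1 \<le> 3 * real N" using \<open>1 \<le> N\<close> by simp
  obtain pre1 seg1 suf1 where c1: "\<gamma> = pre1 @ seg1 @ suf1" "seg1 \<noteq> []"
    "set pre1 \<inter> box_at z (real N - 1) = {}" "set seg1 \<subseteq> box_at z (3 * real N) - box_at z (real N - 1)"
    "hd seg1 \<in> bdry_at z (3 * real N)" "last seg1 \<in> bdry_at z (real N)"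
    using walk_crossing_segment[OF \<open>walk \<gamma>\<close> _ hit \<open>real N + 1 \<le> 3 * real N\<close>] assms(7)
    unfolding z_def \<open>hd \<gamma> = x\<close> by blast
  obtain pre2 seg2 suf2 where c2: "rev \<gamma> = pre2 @ seg2 @ suf2" "seg2 \<noteq> []"
    "set pre2 \<inter> box_at z (real N - 1) = {}" "set seg2 \<subseteq> box_at z (3 * real N) - box_at z (real N - 1)"
    "hd seg2 \<in> bdry_at z (3 * real N)" "last seg2 \<in> bdry_at z (real N)"
    using walk_crossing_segment[OF walk_rev[OF \<open>walk \<gamma>\<close>] _ _ \<open>real N + 1 \<le> 3 * real N\<close>] hit assms(8)
    unfolding z_def \<open>last \<gamma> = y\<close>[symmetric] by (simp add: hd_rev) blast
  have \<gamma>2: "\<gamma> = rev suf2 @ rev seg2 @ rev pre2" using arg_cong[OF c2(1), of rev] by simp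
  show ?thesis
  proof
    show "\<gamma> = (pre1 @ seg1) @ suf1" "\<gamma> = rev suf2 @ rev (pre2 @ seg2)" using c1(1) \<gamma>2 by simp_all
    show "seg1 \<in> geodesics_in \<tau> H (box_at (edge_base e) (C * real N)) \<inter> crossings e N"
      using crossing[OF c1(1,2)] c1(4-6) unfolding z_def by blast
    show "rev seg2 \<in> geodesics_in \<tau> H (box_at (edge_base e) (C * real N)) \<inter> crossings e N"
      using crossing[OF \<gamma>2] c2(2,4-6) unfolding z_def by (simp add: hd_rev last_rev)
  qed (use c1(3,4) c2(3,4) in \<open>auto simp: z_def\<close>)
qed

theorem proposition2p5:
  fixes \<tau> :: "(int ^ 'd) set \<Rightarrow> ereal"
    and H lam C :: real
    and x y :: "int ^ 'd"
    and \<gamma> :: "(int ^ 'd) list"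
    and e :: "(int ^ 'd) set"
    and R :: nat
  assumes "C \<ge> 3" and "H > 0" and "lam > 0"
    and "\<forall>u v. adj u v \<longrightarrow> \<tau> {u, v} \<ge> 0"
    and "\<gamma> \<in> geodesics \<tau> H UNIV x y"
    and "e \<in> path_edges \<gamma>"
    and "eff_radius \<tau> H lam C e = enat R"
    and "x \<notin> box_at (edge_base e) (3 * real R)"
    and "y \<notin> box_at (edge_base e) (3 * real R)"
  shows "\<exists>\<eta>. path_from_to \<eta> x y
            \<and> set \<eta> \<inter> box_at (edge_base e) (real R - 1) = {}
            \<and> (\<forall>f \<in> path_edges \<eta> - path_edges \<gamma>. q_open \<tau> lam f)
            \<and> real (card (path_edges \<eta> - path_edges \<gamma>)) \<le> C * real R"
proof -
  let ?inner = "box_at (edge_base e) (real R - 1)"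
  have "3 \<le> R" and ok: "eff_radius_ok \<tau> H lam C e R" using eff_radius_eq_enatD[OF assms(7)] by auto
  have "1 \<le> R" using \<open>3 \<le> R\<close> by simp
  obtain P1 Q1 Q2 P2 seg1 seg2 where \<gamma>: "\<gamma> = P1 @ Q1" "\<gamma> = Q2 @ P2"
    and avoid: "set P1 \<inter> ?inner = {}" "set P2 \<inter> ?inner = {}"
    and "set seg1 \<subseteq> set P1" and seg1: "seg1 \<in> geodesics_in \<tau> H (box_at (edge_base e) (C * real R)) \<inter> crossings e R"
    and "set seg2 \<subseteq> set P2" and seg2: "seg2 \<in> geodesics_in \<tau> H (box_at (edge_base e) (C * real R)) \<inter> crossings e R"
    by (rule geodesic_crossings_around_edge[OF assms(4) less_imp_le[OF assms(2)] assms(1,5,6) \<open>1 \<le> R\<close> assms(8,9)])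
  have "Dq \<tau> lam (annulus e R) (set seg1) (set seg2) \<le> ereal (C * real R)"
    using ok seg1 seg2 unfolding eff_radius_ok_def by blast
  then obtain p where p: "is_path p" "set p \<subseteq> annulus e R" "hd p \<in> set seg1" "last p \<in> set seg2"
    "\<forall>f\<in>path_edges p. q_open \<tau> lam f" "real (length p - 1) \<le> C * real R"
    by (rule Dq_leE)
  have "path_from_to \<gamma> x y" "walk p"
    using assms(5) p(1) unfolding geodesics_def by (simp_all add: is_path_iff_walk)
  then obtain \<eta> where \<eta>: "path_from_to \<eta> x y" "set \<eta> \<subseteq> set P1 \<union> set p \<union> set P2"
    "path_edges \<eta> \<subseteq> path_edges \<gamma> \<union> path_edges p"
    using path_reroute[OF _ \<gamma>] p(3,4) \<open>set seg1 \<subseteq> set P1\<close> \<open>set seg2 \<subseteq> set P2\<close> by blast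
  have "set p \<inter> ?inner = {}"
    using p(2) box_at_mono[of "real R - 1" "real R"] unfolding annulus_def by auto
  then have "set \<eta> \<inter> ?inner = {}" using \<eta>(2) avoid by auto
  moreover have new_edges: "path_edges \<eta> - path_edges \<gamma> \<subseteq> path_edges p" using \<eta>(3) by auto
  then have "card (path_edges \<eta> - path_edges \<gamma>) \<le> length p - 1"
    using card_mono[OF finite_path_edges new_edges] card_path_edges_le[of p] by linarith
  ultimately show ?thesis using \<eta>(1) p(5,6) new_edges by (intro exI[of _ \<eta>]) force
qed

end
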